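(* Let $\Lambda\in\mathcal{M}_2$ and $a\in[0,1]$, and let $\widehat{\Lambda}(t):=\Lambda(t,1-t)$ for $t\in[0,1]$. The following are equivalent: (1) the right derivative $\widehat{\Lambda}'(0)$ equals $a$; (2) $\lim_{y\to\infty}\Lambda(x,y)=ax$ for all $x\in\mathbb{R}_+$.
   Context: $\mathcal{M}_2$ is the set of bivariate (lower) tail dependence functions, i.e. functions $\mathbb{R}_+^2\to\mathbb{R}_+$ ($\mathbb{R}_+=[0,\infty)$) of the form $\Lambda(\mathbf{w})=\lim_{s\searrow0}C(s\mathbf{w})/s$ for a $2$-copula $C$ (limit existing for all $\mathbf{w}$). Such $\Lambda$ are concave, $1$-Lipschitz, positively homogeneous of order $1$, and satisfy $0\le\Lambda(w_1,w_2)\le\min\{w_1,w_2\}$. *)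

theory Defs
  imports "HOL-Analysis.Analysis"
begin

text \<open>A 2-copula, as a function on the reals whose behaviour on the unit square
  is constrained: grounded, uniform margins, 2-increasing (values in [0,1] follow).\<close>
definition copula2 :: "(real \<Rightarrow> real \<Rightarrow> real) \<Rightarrow> bool" where
  "copula2 C \<longleftrightarrow>
     (\<forall>u\<in>{0..1}. C u 0 = 0 \<and> C 0 u = 0 \<and> C u 1 = u \<and> C 1 u = u) \<and>
     (\<forall>u1 u2 v1 v2. 0 \<le> u1 \<and> u1 \<le> u2 \<and> u2 \<le> 1 \<and> 0 \<le> v1 \<and> v1 \<le> v2 \<and> v2 \<le> 1 \<longrightarrow>
        C u2 v2 - C u2 v1 - C u1 v2 + C u1 v1 \<ge> 0)"

text \<open>The class M_2 of bivariate lower tail dependence functions: Lambda(w) is the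
  limit of C(s w)/s as s decreases to 0, for every w in R_+^2 (only values on R_+^2 matter).\<close>
definition M2 :: "(real \<Rightarrow> real \<Rightarrow> real) set" where
  "M2 = {\<Lambda>. \<exists>C. copula2 C \<and>
     (\<forall>w1 w2. 0 \<le> w1 \<longrightarrow> 0 \<le> w2 \<longrightarrow>
        ((\<lambda>s. C (s * w1) (s * w2) / s) \<longlongrightarrow> \<Lambda> w1 w2) (at_right 0))}"

end

theory Submission
  imports Defs "HOL-Real_Asymp.Real_Asymp"
begin

text \<open>Both conditions say that \<open>\<Lambda>(1, y) \<rightarrow> a\<close> as \<open>y \<rightarrow> \<infinity>\<close>. Since \<open>\<Lambda>\<close> is positively homogeneous,
  \<open>\<Lambda>(t, 1 - t) / t = \<Lambda>(1, (1 - t) / t)\<close> and \<open>\<Lambda>(x, y) = x \<Lambda>(1, y / x)\<close>; as \<open>\<Lambda>(0, 1) = 0\<close>, the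
  right derivative at \<open>0\<close> is the limit of the former quotient, and \<open>t \<mapsto> (1 - t) / t\<close> maps the
  right neighbourhoods of \<open>0\<close> onto the neighbourhoods of \<open>\<infinity>\<close>.\<close>

definition positively_homogeneous2 :: "(real \<Rightarrow> real \<Rightarrow> real) \<Rightarrow> bool" where
  "positively_homogeneous2 L \<longleftrightarrow>
     (\<forall>c>0. \<forall>w1\<ge>0. \<forall>w2\<ge>0. L (c * w1) (c * w2) = c * L w1 w2)"

lemma positively_homogeneous2D:
  assumes "positively_homogeneous2 L" "c > 0" "w1 \<ge> 0" "w2 \<ge> 0"
  shows "L (c * w1) (c * w2) = c * L w1 w2"
  using assms unfolding positively_homogeneous2_def by blast

lemma positively_homogeneous2_eq_scaled:
  assumes "positively_homogeneous2 L" "x > 0" "y \<ge> 0"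
  shows "L x y = x * L 1 (y / x)"
  using positively_homogeneous2D[OF assms(1,2), of 1 "y / x"] assms(2,3) by simp

lemma M2_positively_homogeneous:
  assumes "\<Lambda> \<in> M2"
  shows "positively_homogeneous2 \<Lambda>"
  unfolding positively_homogeneous2_def
proof (intro allI impI)
  fix c w1 w2 :: real
  assume c: "c > 0" and w: "w1 \<ge> 0" "w2 \<ge> 0"
  obtain C where lim: "\<And>w1 w2. 0 \<le> w1 \<Longrightarrow> 0 \<le> w2 \<Longrightarrow>
      ((\<lambda>s. C (s * w1) (s * w2) / s) \<longlongrightarrow> \<Lambda> w1 w2) (at_right 0)"
    using assms unfolding M2_def by blast
  have "((\<lambda>s. C (s * w1) (s * w2) / s) \<longlongrightarrow> \<Lambda> w1 w2) (filtermap (times c) (at_right 0))"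
    using lim[OF w] filtermap_times_pos_at_right[OF c, of 0] by simp
  then have "((\<lambda>s. C ((c * s) * w1) ((c * s) * w2) / (c * s)) \<longlongrightarrow> \<Lambda> w1 w2) (at_right 0)"
    by (simp add: filterlim_filtermap)
  then have "((\<lambda>s. c * (C ((c * s) * w1) ((c * s) * w2) / (c * s))) \<longlongrightarrow> c * \<Lambda> w1 w2)
      (at_right 0)"
    by (rule tendsto_mult_left)
  moreover have "(\<lambda>s. c * (C ((c * s) * w1) ((c * s) * w2) / (c * s)))
      = (\<lambda>s. C (s * (c * w1)) (s * (c * w2)) / s)"
    using c by (auto simp: fun_eq_iff field_simps)
  ultimately have "((\<lambda>s. C (s * (c * w1)) (s * (c * w2)) / s) \<longlongrightarrow> c * \<Lambda> w1 w2) (at_right 0)"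
    by simp
  moreover have "((\<lambda>s. C (s * (c * w1)) (s * (c * w2)) / s) \<longlongrightarrow> \<Lambda> (c * w1) (c * w2)) (at_right 0)"
    using lim c w by simp
  ultimately show "\<Lambda> (c * w1) (c * w2) = c * \<Lambda> w1 w2"
    by (rule tendsto_unique[OF trivial_limit_at_right_real, symmetric])
qed

lemma M2_zero_left:
  assumes "\<Lambda> \<in> M2"
  shows "\<Lambda> 0 1 = 0"
proof -
  obtain C where C: "copula2 C" and lim: "\<And>w1 w2. 0 \<le> w1 \<Longrightarrow> 0 \<le> w2 \<Longrightarrow>
      ((\<lambda>s. C (s * w1) (s * w2) / s) \<longlongrightarrow> \<Lambda> w1 w2) (at_right 0)"
    using assms unfolding M2_def by blast
  have "eventually (\<lambda>s. C 0 s / s = 0) (at_right (0::real))"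
    unfolding eventually_at_right_field
    using C by (intro exI[of _ 1]) (auto simp: copula2_def)
  then have "((\<lambda>s. C 0 s / s) \<longlongrightarrow> 0) (at_right 0)"
    by (rule tendsto_eventually)
  moreover have "((\<lambda>s. C 0 s / s) \<longlongrightarrow> \<Lambda> 0 1) (at_right 0)"
    using lim[of 0 1] by simp
  ultimately show ?thesis
    by (rule tendsto_unique[OF trivial_limit_at_right_real, symmetric])
qed

lemma filtermap_odds_at_right_0: "filtermap (\<lambda>t. (1 - t) / t) (at_right (0::real)) = at_top"
proof (rule filtermap_fun_inverse[where g = "\<lambda>y. 1 / (1 + y)"])
  show "filterlim (\<lambda>y. 1 / (1 + y)) (at_right 0) (at_top :: real filter)"
    by real_asymp
  show "filterlim (\<lambda>t. (1 - t) / t) at_top (at_right (0::real))"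
    by real_asymp
  show "eventually (\<lambda>y. (1 - 1 / (1 + y)) / (1 / (1 + y)) = y) (at_top :: real filter)"
    using eventually_gt_at_top[of 0] by eventually_elim (simp add: field_simps)
qed

lemma filtermap_divide_pos_at_top:
  assumes "c > 0"
  shows "filtermap (\<lambda>y. y / c) at_top = (at_top :: real filter)"
  by (rule filtermap_fun_inverse[where g = "\<lambda>y. c * y"]) (use assms in \<open>real_asymp | simp\<close>)+

lemma positively_homogeneous2_section_derivative_iff:
  assumes hom: "positively_homogeneous2 L" and zero: "L 0 1 = 0"
  shows "((\<lambda>t. L t (1 - t)) has_real_derivative a) (at 0 within {0..1})
     \<longleftrightarrow> (L 1 \<longlongrightarrow> a) at_top"
proof -
  have "eventually (\<lambda>t. L t (1 - t) / t = L 1 ((1 - t) / t)) (at_right (0::real))"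
    unfolding eventually_at_right_field
  proof (intro exI[of _ 1] conjI allI impI)
    fix t :: real
    assume "0 < t" "t < 1"
    then show "L t (1 - t) / t = L 1 ((1 - t) / t)"
      using positively_homogeneous2_eq_scaled[OF hom, of t "1 - t"] by simp
  qed simp
  then have "((\<lambda>t. L t (1 - t) / t) \<longlongrightarrow> a) (at_right 0)
      \<longleftrightarrow> ((\<lambda>t. L 1 ((1 - t) / t)) \<longlongrightarrow> a) (at_right 0)"
    by (rule tendsto_cong)
  also have "\<dots> \<longleftrightarrow> (L 1 \<longlongrightarrow> a) (filtermap (\<lambda>t. (1 - t) / t) (at_right 0))"
    by (simp add: filterlim_filtermap)
  also have "\<dots> \<longleftrightarrow> (L 1 \<longlongrightarrow> a) at_top"
    by (simp only: filtermap_odds_at_right_0)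
  finally show ?thesis
    using zero by (simp add: has_field_derivative_iff at_within_Icc_at_right)
qed

lemma positively_homogeneous2_tendsto_at_top_iff:
  assumes hom: "positively_homogeneous2 L" and zero: "L 0 1 = 0"
  shows "(L 1 \<longlongrightarrow> a) at_top \<longleftrightarrow> (\<forall>x\<ge>0. (L x \<longlongrightarrow> a * x) at_top)"
proof
  assume lim: "(L 1 \<longlongrightarrow> a) at_top"
  show "\<forall>x\<ge>0. (L x \<longlongrightarrow> a * x) at_top"
  proof (intro allI impI)
    fix x :: real
    assume "x \<ge> 0"
    then consider "x = 0" | "x > 0" by linarith
    then show "(L x \<longlongrightarrow> a * x) at_top"
    proof cases
      case 1
      have "eventually (\<lambda>y. L 0 y = 0) at_top"
        using eventually_gt_at_top[of 0]
      proof eventually_elim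
        case (elim y)
        then show ?case
          using positively_homogeneous2D[OF hom elim, of 0 1] zero by simp
      qed
      with 1 show ?thesis
        by (simp add: tendsto_eventually)
    next
      case 2
      have "((\<lambda>y. L 1 (y / x)) \<longlongrightarrow> a) at_top"
        using lim filterlim_filtermap[of "L 1" _ "\<lambda>y. y / x" at_top]
        by (simp add: filtermap_divide_pos_at_top[OF 2])
      then have "((\<lambda>y. x * L 1 (y / x)) \<longlongrightarrow> x * a) at_top"
        by (rule tendsto_mult_left)
      moreover have "eventually (\<lambda>y. x * L 1 (y / x) = L x y) at_top"
        using eventually_ge_at_top[of 0]
        by eventually_elim (simp add: positively_homogeneous2_eq_scaled[OF hom 2])
      ultimately show ?thesis
        by (simp add: tendsto_cong mult.commute)
    qed
  qed
next
  assume "\<forall>x\<ge>0. (L x \<longlongrightarrow> a * x) at_top"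
  then show "(L 1 \<longlongrightarrow> a) at_top"
    by (metis mult_1_right zero_le_one)
qed

theorem mainTheorem7:
  fixes \<Lambda> :: "real \<Rightarrow> real \<Rightarrow> real" and a :: real
  assumes "\<Lambda> \<in> M2" and "0 \<le> a" and "a \<le> 1"
  shows "((\<lambda>t. \<Lambda> t (1 - t)) has_real_derivative a) (at 0 within {0..1})
     \<longleftrightarrow> (\<forall>x\<ge>0. ((\<lambda>y. \<Lambda> x y) \<longlongrightarrow> a * x) at_top)"
proof -
  have hom: "positively_homogeneous2 \<Lambda>" and zero: "\<Lambda> 0 1 = 0"
    using assms(1) by (rule M2_positively_homogeneous, rule M2_zero_left)
  show ?thesis
    using positively_homogeneous2_section_derivative_iff[OF hom zero]
      positively_homogeneous2_tendsto_at_top_iff[OF hom zero]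
    by simp
qed

end
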